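(* In the hierarchical partition construction described in the context, every set $S^*\in\mathcal S_j$ (for $j\ge1$) has at most $\lambda^{3+\eta}$ children, i.e. at most $\lambda^{3+\eta}$ sets $S\in\mathcal S_{j-1}$ satisfy $S\subseteq S^*$.
   Context: Let $(V,d)$ be a finite metric space with $|V|\ge 2$ which is doubling with constant $\lambda$: for every $v\in V$ and $r>0$ the open ball $B_{2r}(v)=\{u:d(u,v)<2r\}$ is contained in the union of at most $\lambda$ open balls $B_r(w)$, $w\in V$. Fix an integer $\eta\ge2$ and a real $\tau$ with $1+\frac{1}{2^{\eta-1}-1}\le\tau\le 2^{\eta}$. For $L\subseteq V$ and $r>0$, a greedy partition of $L$ with parameter $r$ is obtained by: set $L_0=L$; while $L_i\ne\emptyset$ choose any $v_i\in L_i$, let $P_i=\{u\in L_i: d(u,v_i)<2^{-\eta-1}r\}$ with leader $v_i$, and set $L_{i+1}=L_i\setminus P_i$. Hierarchical partition construction: choose $r_0$ with $0<r_0<\min_{u\ne v}d(u,v)$ and put $r_j=\tau^j r_0$. Let $\mathcal S_0=\{\{v\}:v\in V\}$, the leader of $\{v\}$ being $v$. While $\mathcal S_j$ has more than one element: let $L_j$ be the set of leaders of the sets in $\mathcal S_j$, let $\mathcal S'_{j+1}$ be a greedy partition of $L_j$ with parameter $2r_{j+1}$, and let $\mathcal S_{j+1}$ consist, for each $P\in\mathcal S'_{j+1}$, of the set $\bigcup\{S\in\mathcal S_j:\mathrm{leader}(S)\in P\}$, whose leader is defined to be the leader of $P$. Each $\mathcal S_j$ is a partition of $V$; $S\in\mathcal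 S_{j-1}$ is a child of $S^*\in\mathcal S_{j}$ if $S\subseteq S^*$. *)

theory Defs
  imports Complex_Main
begin

definition finite_metric :: "'a set \<Rightarrow> ('a \<Rightarrow> 'a \<Rightarrow> real) \<Rightarrow> bool" where
  "finite_metric V d \<longleftrightarrow> finite V \<and>
     (\<forall>x\<in>V. \<forall>y\<in>V. (d x y = 0 \<longleftrightarrow> x = y) \<and> d x y = d y x) \<and>
     (\<forall>x\<in>V. \<forall>y\<in>V. \<forall>z\<in>V. d x z \<le> d x y + d y z)"

definition oball :: "'a set \<Rightarrow> ('a \<Rightarrow> 'a \<Rightarrow> real) \<Rightarrow> 'a \<Rightarrow> real \<Rightarrow> 'a set" where
  "oball V d v r = {u \<in> V. d u v < r}"

definition doubling :: "'a set \<Rightarrow> ('a \<Rightarrow> 'a \<Rightarrow> real) \<Rightarrow> nat \<Rightarrow> bool" where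
  "doubling V d lam \<longleftrightarrow> (\<forall>v\<in>V. \<forall>r>0. \<exists>W. W \<subseteq> V \<and> finite W \<and> card W \<le> lam \<and>
      oball V d v (2 * r) \<subseteq> (\<Union>w\<in>W. oball V d w r))"

text \<open>Greedy partition of L with parameter r: a list of (leader, part) pairs in the
order produced by the greedy procedure.\<close>
inductive greedy_part :: "('a \<Rightarrow> 'a \<Rightarrow> real) \<Rightarrow> nat \<Rightarrow> real \<Rightarrow> 'a set \<Rightarrow> ('a \<times> 'a set) list \<Rightarrow> bool"
  for d :: "'a \<Rightarrow> 'a \<Rightarrow> real" and eta :: nat and r :: real where
  empty: "greedy_part d eta r {} []"
| step: "v \<in> L \<Longrightarrow> P = {u \<in> L. d u v < r / 2 ^ (eta + 1)} \<Longrightarrow>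
         greedy_part d eta r (L - P) ps \<Longrightarrow> greedy_part d eta r L ((v, P) # ps)"

text \<open>A run of the hierarchical partition construction: Ss j is the set of pairs
(leader, set) forming the partition S_j, for j = 0..J, where J is the final level
(the first with a single set).\<close>
definition hier_run :: "'a set \<Rightarrow> ('a \<Rightarrow> 'a \<Rightarrow> real) \<Rightarrow> nat \<Rightarrow> real \<Rightarrow> real \<Rightarrow>
    (nat \<Rightarrow> ('a \<times> 'a set) set) \<Rightarrow> nat \<Rightarrow> bool" where
  "hier_run V d eta tau r0 Ss J \<longleftrightarrow>
     Ss 0 = {(v, {v}) | v. v \<in> V} \<and>
     (\<forall>j<J. card (Ss j) > 1 \<and>
        (\<exists>gp. greedy_part d eta (2 * (tau ^ (Suc j) * r0)) (fst ` Ss j) gp \<and>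
           Ss (Suc j) = {(v, \<Union>{S. \<exists>l. (l, S) \<in> Ss j \<and> l \<in> P}) | v P. (v, P) \<in> set gp})) \<and>
     card (Ss J) = 1"

end

theory Submission
  imports Defs
begin

(*
  Write sigma_m = tau^m * r0 / 2^eta.  By induction on the level m, every
  S_m is a partition of V into sets containing their leaders, and distinct leaders of
  S_m are sigma_m-separated: the singletons of level 0 are r0-separated, and a greedy
  partition with parameter 2 tau^(m+1) r0 picks leaders pairwise at distance at least
  2 tau^(m+1) r0 / 2^(eta+1) = sigma_(m+1).  A set S* of S_j (j = m+1) is the union of
  the children whose leaders lie in one greedy part P, so it has at most |P| children.
  P is a sigma_m-separated set inside the ball of radius tau sigma_m around the leader
  of S*, and tau <= 2^eta gives tau sigma_m / 2^(eta+1) <= sigma_m / 2.  Applying the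
  doubling property eta+1 times covers that ball by lam^(eta+1) balls of radius below
  sigma_m / 2, each containing at most one point of P; so |P| <= lam^(eta+1) <= lam^(3+eta).
*)

section \<open>Greedy partitions\<close>

lemma greedy_part_entry:
  assumes "greedy_part d eta r L gp" and "(v, P) \<in> set gp"
  shows "v \<in> L \<and> P \<subseteq> L \<and> (\<forall>u\<in>P. d u v < r / 2 ^ (eta + 1))
         \<and> (d v v < r / 2 ^ (eta + 1) \<longrightarrow> v \<in> P)"
  using assms
proof (induction arbitrary: v P rule: greedy_part.induct)
  case empty
  then show ?case by simp
next
  case (step w L Q ps)
  then show ?case by auto
qed

text \<open>Distinct entries of a greedy partition have disjoint parts, and the later leader
  lies outside the part of the earlier one, hence far from it.\<close>
lemma greedy_part_distinct_entries:
  assumes "greedy_part d eta r L gp"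
    and "(v, P) \<in> set gp" and "(v', P') \<in> set gp" and "(v, P) \<noteq> (v', P')"
  shows "P \<inter> P' = {} \<and> (r / 2 ^ (eta + 1) \<le> d v v' \<or> r / 2 ^ (eta + 1) \<le> d v' v)"
  using assms
proof (induction arbitrary: v P v' P' rule: greedy_part.induct)
  case empty
  then show ?case by simp
next
  case (step w L Q ps)
  have later: "x \<in> L - Q \<and> X \<subseteq> L - Q" if "(x, X) \<in> set ps" for x X
    using greedy_part_entry[OF step.hyps(3) that] by blast
  consider "(v, P) = (w, Q)" "(v', P') \<in> set ps" | "(v', P') = (w, Q)" "(v, P) \<in> set ps"
    | "(v, P) \<in> set ps" "(v', P') \<in> set ps"
    using step.prems by auto
  then show ?case
  proof cases
    case 1
    then show ?thesis using later[of v' P'] step.hyps(2) by fastforce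
  next
    case 2
    then show ?thesis using later[of v P] step.hyps(2) by fastforce
  qed (use step.IH step.prems in blast)
qed

section \<open>Separated sets and the packing bound\<close>

definition separated :: "('a \<Rightarrow> 'a \<Rightarrow> real) \<Rightarrow> real \<Rightarrow> 'a set \<Rightarrow> bool" where
  "separated d s A \<longleftrightarrow> (\<forall>u\<in>A. \<forall>u'\<in>A. u \<noteq> u' \<longrightarrow> s \<le> d u u')"

lemma separated_subset: "separated d s A \<Longrightarrow> B \<subseteq> A \<Longrightarrow> separated d s B"
  unfolding separated_def by blast

lemma greedy_part_leaders_separated:
  assumes "finite_metric V d" and "L \<subseteq> V" and gp: "greedy_part d eta r L gp"
  shows "separated d (r / 2 ^ (eta + 1)) (fst ` set gp)"
  unfolding separated_def
proof (intro ballI impI)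
  fix u u' assume "u \<in> fst ` set gp" "u' \<in> fst ` set gp" "u \<noteq> u'"
  then obtain P P' where entries: "(u, P) \<in> set gp" "(u', P') \<in> set gp" "(u, P) \<noteq> (u', P')"
    by auto
  have "u \<in> V" "u' \<in> V"
    using greedy_part_entry[OF gp entries(1)] greedy_part_entry[OF gp entries(2)] assms(2)
    by blast+
  then have "d u u' = d u' u" using assms(1) unfolding finite_metric_def by blast
  then show "r / 2 ^ (eta + 1) \<le> d u u'"
    using greedy_part_distinct_entries[OF gp entries] by auto
qed

lemma doubling_cover_iter:
  assumes dbl: "doubling V d lam" and "v \<in> V" and "r > 0"
  shows "\<exists>W. W \<subseteq> V \<and> finite W \<and> card W \<le> lam ^ k \<and>
           oball V d v r \<subseteq> (\<Union>w\<in>W. oball V d w (r / 2 ^ k))"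
proof (induction k)
  case 0
  show ?case by (rule exI[of _ "{v}"]) (use assms in auto)
next
  case (Suc k)
  then obtain W where W: "W \<subseteq> V" "finite W" "card W \<le> lam ^ k"
    "oball V d v r \<subseteq> (\<Union>w\<in>W. oball V d w (r / 2 ^ k))" by blast
  define r' where "r' = r / 2 ^ Suc k"
  have "r' > 0" and double: "2 * r' = r / 2 ^ k" using assms(3) by (simp_all add: r'_def)
  have "\<exists>U. U \<subseteq> V \<and> finite U \<and> card U \<le> lam \<and>
      oball V d w (r / 2 ^ k) \<subseteq> (\<Union>u\<in>U. oball V d u r')" if "w \<in> W" for w
  proof -
    have "w \<in> V" using that W(1) by blast
    with dbl \<open>r' > 0\<close> show ?thesis unfolding doubling_def double[symmetric] by blast
  qed
  then obtain U where U: "\<And>w. w \<in> W \<Longrightarrow> U w \<subseteq> V \<and> finite (U w) \<and> card (U w) \<le> lam \<and>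
      oball V d w (r / 2 ^ k) \<subseteq> (\<Union>u\<in>U w. oball V d u r')"
    by metis
  have "card (\<Union>w\<in>W. U w) \<le> (\<Sum>w\<in>W. card (U w))" by (rule card_UN_le[OF W(2)])
  also have "\<dots> \<le> card W * lam" using sum_mono[of W "\<lambda>w. card (U w)" "\<lambda>_. lam"] U by simp
  also have "\<dots> \<le> lam ^ Suc k" using W(3) by (simp add: mult.commute)
  finally have "card (\<Union>w\<in>W. U w) \<le> lam ^ Suc k" .
  moreover have "oball V d v r \<subseteq> (\<Union>u\<in>(\<Union>w\<in>W. U w). oball V d u r')"
  proof
    fix x assume "x \<in> oball V d v r"
    then obtain w where "w \<in> W" "x \<in> oball V d w (r / 2 ^ k)" using W(4) by blast
    then show "x \<in> (\<Union>u\<in>(\<Union>w\<in>W. U w). oball V d u r')" using U[of w] by blast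
  qed
  moreover have "(\<Union>w\<in>W. U w) \<subseteq> V" "finite (\<Union>w\<in>W. U w)" using U W(2) by auto
  ultimately show ?case unfolding r'_def by blast
qed

text \<open>Packing bound: a \<sigma>-separated subset of a ball of radius \<rho> has at most lam^k points
  as soon as \<rho> / 2^k \<le> \<sigma> / 2, since each covering ball of radius \<rho> / 2^k contains at most
  one of its points.\<close>
lemma doubling_packing:
  assumes met: "finite_metric V d" and dbl: "doubling V d lam"
    and c: "c \<in> V" and rho: "\<rho> > 0"
    and PV: "P \<subseteq> V" and in_ball: "\<forall>u\<in>P. d u c < \<rho>"
    and sep: "separated d \<sigma> P" and radius: "\<rho> / 2 ^ k \<le> \<sigma> / 2"
  shows "card P \<le> lam ^ k"
proof -
  obtain W where W: "W \<subseteq> V" "finite W" "card W \<le> lam ^ k"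
    "oball V d c \<rho> \<subseteq> (\<Union>w\<in>W. oball V d w (\<rho> / 2 ^ k))"
    using doubling_cover_iter[OF dbl c rho, of k] by blast
  have "\<forall>u\<in>P. \<exists>w. w \<in> W \<and> u \<in> oball V d w (\<rho> / 2 ^ k)"
    using W(4) PV in_ball unfolding oball_def by blast
  then obtain f where f: "\<forall>u\<in>P. f u \<in> W \<and> u \<in> oball V d (f u) (\<rho> / 2 ^ k)"
    by (rule bchoice[THEN exE])
  have "inj_on f P"
  proof (rule inj_onI, rule ccontr)
    fix u u' assume u: "u \<in> P" "u' \<in> P" "f u = f u'" "u \<noteq> u'"
    define w where "w = f u"
    have "w \<in> W" "d u w < \<rho> / 2 ^ k" "d u' w < \<rho> / 2 ^ k"
      using f u(1,2,3) unfolding w_def oball_def by auto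
    moreover have "u \<in> V" "u' \<in> V" "w \<in> V" using u(1,2) PV \<open>w \<in> W\<close> W(1) by blast+
    then have "d u u' \<le> d u w + d w u'" "d w u' = d u' w"
      using met unfolding finite_metric_def by blast+
    moreover have "\<sigma> \<le> d u u'" using sep u(1,2,4) unfolding separated_def by blast
    ultimately show False using radius by linarith
  qed
  moreover have "f ` P \<subseteq> W" using f by blast
  ultimately have "card P \<le> card W" using card_inj_on_le W(2) by blast
  then show ?thesis using W(3) by linarith
qed

section \<open>Partitions with leaders and one coarsening step\<close>

definition leader_partition :: "'a set \<Rightarrow> ('a \<times> 'a set) set \<Rightarrow> bool" where
  "leader_partition V X \<longleftrightarrow> (\<forall>p\<in>X. fst p \<in> snd p \<and> snd p \<subseteq> V) \<and>
     (\<forall>p\<in>X. \<forall>q\<in>X. p \<noteq> q \<longrightarrow> snd p \<inter> snd q = {})"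

definition blocks :: "('a \<times> 'a set) set \<Rightarrow> 'a set \<Rightarrow> 'a set" where
  "blocks X P = \<Union>{S. \<exists>l. (l, S) \<in> X \<and> l \<in> P}"

definition coarsen :: "('a \<times> 'a set) set \<Rightarrow> ('a \<times> 'a set) list \<Rightarrow> ('a \<times> 'a set) set" where
  "coarsen X gp = {(v, blocks X P) | v P. (v, P) \<in> set gp}"

lemma leader_partition_member:
  assumes "leader_partition V X" and "(l, S) \<in> X"
  shows "l \<in> S" and "S \<subseteq> V"
  using assms unfolding leader_partition_def by (metis fst_conv snd_conv)+

lemma leader_partition_leaders:
  assumes "leader_partition V X"
  shows "fst ` X \<subseteq> V"
  using leader_partition_member[OF assms] by force

lemma leader_partition_unique:
  assumes "leader_partition V X" and "(l, S) \<in> X" and "(l', S') \<in> X"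
    and "x \<in> S" and "x \<in> S'"
  shows "(l, S) = (l', S')"
proof (rule ccontr)
  assume "(l, S) \<noteq> (l', S')"
  then have "S \<inter> S' = {}" using assms(1-3) unfolding leader_partition_def by (metis snd_conv)
  then show False using assms(4,5) by blast
qed

text \<open>Every set of X contained in blocks X P has its leader in P.  Hence, in a leader
  partition of a finite V, blocks X P has at most |P| sets of X below it.\<close>
lemma card_sets_below_blocks:
  assumes X: "leader_partition V X" and "finite V" and "P \<subseteq> V"
  shows "card {S. \<exists>l. (l, S) \<in> X \<and> S \<subseteq> blocks X P} \<le> card P"
proof -
  define B where "B = {p \<in> X. fst p \<in> P}"
  have below: "{S. \<exists>l. (l, S) \<in> X \<and> S \<subseteq> blocks X P} \<subseteq> snd ` B"
  proof
    fix S assume "S \<in> {S. \<exists>l. (l, S) \<in> X \<and> S \<subseteq> blocks X P}"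
    then obtain l where l: "(l, S) \<in> X" "S \<subseteq> blocks X P" by blast
    have "l \<in> S" using leader_partition_member[OF X l(1)] by simp
    then obtain l' S' where l': "(l', S') \<in> X" "l' \<in> P" "l \<in> S'"
      using l(2) unfolding blocks_def by blast
    have "(l, S) = (l', S')" by (rule leader_partition_unique[OF X l(1) l'(1) \<open>l \<in> S\<close> l'(3)])
    then have "(l, S) \<in> B" using l(1) l'(2) unfolding B_def by simp
    then show "S \<in> snd ` B" by (metis image_eqI snd_conv)
  qed
  have inj: "inj_on fst B"
  proof (rule inj_onI)
    fix p q assume "p \<in> B" "q \<in> B" "fst p = fst q"
    moreover obtain l S l' S' where pq: "p = (l, S)" "q = (l', S')" by (cases p, cases q)
    ultimately have in_X: "(l, S) \<in> X" "(l', S') \<in> X" and "l = l'" unfolding B_def by simp_all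
    have "l \<in> S" "l' \<in> S'" using leader_partition_member(1)[OF X] in_X by simp_all
    then have "l \<in> S'" using \<open>l = l'\<close> by simp
    show "p = q" unfolding pq by (rule leader_partition_unique[OF X in_X \<open>l \<in> S\<close> \<open>l \<in> S'\<close>])
  qed
  have leaders_B: "fst ` B \<subseteq> P" unfolding B_def by blast
  have "finite P" using assms(2,3) by (rule finite_subset[rotated])
  then have "finite B" and "card B \<le> card P"
    using finite_imageD[OF finite_subset[OF leaders_B] inj] card_inj_on_le[OF inj leaders_B]
    by simp_all
  have "card {S. \<exists>l. (l, S) \<in> X \<and> S \<subseteq> blocks X P} \<le> card (snd ` B)"
    using below \<open>finite B\<close> by (intro card_mono) auto
  also have "\<dots> \<le> card B" using \<open>finite B\<close> by (rule card_image_le)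
  finally show ?thesis using \<open>card B \<le> card P\<close> by linarith
qed

text \<open>Coarsening a leader partition along a greedy partition of its leaders yields again
  a leader partition: the new leader lies in its own greedy part (distance 0 from itself),
  and disjoint greedy parts collect disjoint families of sets.\<close>
lemma coarsen_leader_partition:
  assumes X: "leader_partition V X" and met: "finite_metric V d" and "r > 0"
    and gp: "greedy_part d eta r (fst ` X) gp"
  shows "leader_partition V (coarsen X gp)"
proof -
  have own: "v \<in> blocks X P \<and> blocks X P \<subseteq> V" if "(v, P) \<in> set gp" for v P
  proof -
    have entry: "v \<in> fst ` X" "d v v < r / 2 ^ (eta + 1) \<longrightarrow> v \<in> P"
      using greedy_part_entry[OF gp that] by blast+
    then obtain S where S: "(v, S) \<in> X" by force
    then have "v \<in> V" using leader_partition_member[OF X] by blast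
    then have "d v v = 0" using met unfolding finite_metric_def by blast
    then have "v \<in> P" using entry(2) \<open>r > 0\<close> by simp
    moreover have "v \<in> S" using leader_partition_member(1)[OF X S] .
    moreover have "blocks X P \<subseteq> V" using leader_partition_member(2)[OF X] unfolding blocks_def by blast
    ultimately show ?thesis using S unfolding blocks_def by blast
  qed
  have disjoint: "blocks X P \<inter> blocks X P' = {}"
    if "(v, P) \<in> set gp" "(v', P') \<in> set gp" "(v, P) \<noteq> (v', P')" for v P v' P'
  proof (rule ccontr)
    assume "blocks X P \<inter> blocks X P' \<noteq> {}"
    then obtain x l S l' S' where in_X: "(l, S) \<in> X" "(l', S') \<in> X"
      and "x \<in> S" "x \<in> S'" "l \<in> P" "l' \<in> P'"
      unfolding blocks_def by blast
    then have "(l, S) = (l', S')" by (intro leader_partition_unique[OF X in_X])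
    then have "l \<in> P \<inter> P'" using \<open>l \<in> P\<close> \<open>l' \<in> P'\<close> by simp
    then show False using greedy_part_distinct_entries[OF gp that] by blast
  qed
  have entry_of: "\<exists>v P. p = (v, blocks X P) \<and> (v, P) \<in> set gp" if "p \<in> coarsen X gp" for p
    using that unfolding coarsen_def by blast
  have "fst p \<in> snd p \<and> snd p \<subseteq> V" if "p \<in> coarsen X gp" for p
    using entry_of[OF that] own by force
  moreover have "snd p \<inter> snd q = {}"
    if pq: "p \<in> coarsen X gp" "q \<in> coarsen X gp" "p \<noteq> q" for p q
  proof -
    obtain v P v' P' where "p = (v, blocks X P)" "(v, P) \<in> set gp"
      "q = (v', blocks X P')" "(v', P') \<in> set gp"
      using entry_of[OF pq(1)] entry_of[OF pq(2)] by blast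
    then show ?thesis using disjoint[of v P v' P'] \<open>p \<noteq> q\<close> by auto
  qed
  ultimately show ?thesis unfolding leader_partition_def by blast
qed

section \<open>The hierarchical construction\<close>

lemma hier_run_level_zero:
  "hier_run V d eta tau r0 Ss J \<Longrightarrow> Ss 0 = {(v, {v}) | v. v \<in> V}"
  unfolding hier_run_def by blast

lemma hier_run_step:
  assumes "hier_run V d eta tau r0 Ss J" and "m < J"
  obtains gp where "greedy_part d eta (2 * (tau ^ Suc m * r0)) (fst ` Ss m) gp"
    and "Ss (Suc m) = coarsen (Ss m) gp"
proof -
  have "\<forall>j<J. card (Ss j) > 1 \<and>
        (\<exists>gp. greedy_part d eta (2 * (tau ^ (Suc j) * r0)) (fst ` Ss j) gp \<and>
           Ss (Suc j) = {(v, \<Union>{S. \<exists>l. (l, S) \<in> Ss j \<and> l \<in> P}) | v P. (v, P) \<in> set gp})"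
    using assms(1) unfolding hier_run_def by (elim conjE)
  then show ?thesis using assms(2) that unfolding coarsen_def blocks_def by blast
qed

lemma hier_run_levels:
  assumes met: "finite_metric V d" and run: "hier_run V d eta tau r0 Ss J"
    and "0 < tau" and "0 < r0" and sepV: "\<forall>u\<in>V. \<forall>v\<in>V. u \<noteq> v \<longrightarrow> r0 < d u v"
    and "m \<le> J"
  shows "leader_partition V (Ss m) \<and> separated d (tau ^ m * r0 / 2 ^ eta) (fst ` Ss m)"
  using \<open>m \<le> J\<close>
proof (induction m)
  case 0
  have "r0 / 2 ^ eta \<le> r0" using \<open>0 < r0\<close> by (simp add: divide_le_eq)
  then have "separated d (r0 / 2 ^ eta) V" using sepV unfolding separated_def by force
  moreover have "fst ` Ss 0 = V" "leader_partition V (Ss 0)"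
    unfolding hier_run_level_zero[OF run] leader_partition_def by force+
  ultimately show ?case by simp
next
  case (Suc m)
  obtain gp where gp: "greedy_part d eta (2 * (tau ^ Suc m * r0)) (fst ` Ss m) gp"
    and next_level: "Ss (Suc m) = coarsen (Ss m) gp"
    using hier_run_step[OF run] Suc.prems by (metis Suc_le_lessD)
  have X: "leader_partition V (Ss m)" using Suc by simp
  have pos: "2 * (tau ^ Suc m * r0) > 0" using \<open>0 < tau\<close> \<open>0 < r0\<close> by simp
  have "separated d (2 * (tau ^ Suc m * r0) / 2 ^ (eta + 1)) (fst ` set gp)"
    using greedy_part_leaders_separated[OF met leader_partition_leaders[OF X] gp] .
  moreover have "fst ` coarsen (Ss m) gp = fst ` set gp" unfolding coarsen_def by force
  ultimately show ?case
    using coarsen_leader_partition[OF X met pos gp] next_level by simp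
qed

text \<open>A set of level m+1 has at most lam^(eta+1) children: they are indexed by the greedy
  part P that formed it, and P is a tau^m * r0 / 2^eta-separated set inside a ball of radius
  tau times that separation, to which the packing bound applies because tau <= 2^eta.\<close>
lemma hier_run_children_bound:
  assumes met: "finite_metric V d" and dbl: "doubling V d lam"
    and "0 < tau" and "tau \<le> 2 ^ eta"
    and "0 < r0" and sepV: "\<forall>u\<in>V. \<forall>v\<in>V. u \<noteq> v \<longrightarrow> r0 < d u v"
    and run: "hier_run V d eta tau r0 Ss J" and "m < J"
    and "(lstar, Sstar) \<in> Ss (Suc m)"
  shows "card {S. \<exists>l. (l, S) \<in> Ss m \<and> S \<subseteq> Sstar} \<le> lam ^ (eta + 1)"
proof -
  define \<sigma> where "\<sigma> = tau ^ m * r0 / 2 ^ eta"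
  have "\<sigma> > 0" using \<open>0 < tau\<close> \<open>0 < r0\<close> by (simp add: \<sigma>_def)
  have X: "leader_partition V (Ss m)" and sep: "separated d \<sigma> (fst ` Ss m)"
    using hier_run_levels[OF met run \<open>0 < tau\<close> \<open>0 < r0\<close> sepV] \<open>m < J\<close> by (simp_all add: \<sigma>_def)
  obtain gp where gp: "greedy_part d eta (2 * (tau ^ Suc m * r0)) (fst ` Ss m) gp"
    and "Ss (Suc m) = coarsen (Ss m) gp"
    using hier_run_step[OF run \<open>m < J\<close>] by blast
  then obtain P where P: "(lstar, P) \<in> set gp" and Sstar: "Sstar = blocks (Ss m) P"
    using \<open>(lstar, Sstar) \<in> Ss (Suc m)\<close> unfolding coarsen_def by blast
  have "2 * (tau ^ Suc m * r0) / 2 ^ (eta + 1) = tau * \<sigma>" by (simp add: \<sigma>_def)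
  then have entry: "lstar \<in> fst ` Ss m" "P \<subseteq> fst ` Ss m" "\<forall>u\<in>P. d u lstar < tau * \<sigma>"
    using greedy_part_entry[OF gp P] by simp_all
  then have "lstar \<in> V" "P \<subseteq> V" using leader_partition_leaders[OF X] by blast+
  have "finite V" using met unfolding finite_metric_def by blast
  then have "card {S. \<exists>l. (l, S) \<in> Ss m \<and> S \<subseteq> Sstar} \<le> card P"
    unfolding Sstar by (rule card_sets_below_blocks[OF X _ \<open>P \<subseteq> V\<close>])
  also have "\<dots> \<le> lam ^ (eta + 1)"
  proof -
    have "tau * \<sigma> > 0" using \<open>0 < tau\<close> \<open>\<sigma> > 0\<close> by simp
    moreover have "tau * \<sigma> / 2 ^ (eta + 1) \<le> \<sigma> / 2"
      using \<open>tau \<le> 2 ^ eta\<close> \<open>\<sigma> > 0\<close> by (simp add: divide_simps)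
    ultimately show ?thesis
      using doubling_packing[OF met dbl \<open>lstar \<in> V\<close> _ \<open>P \<subseteq> V\<close> entry(3)
          separated_subset[OF sep entry(2)]] by blast
  qed
  finally show ?thesis .
qed

theorem lemma5:
  fixes V :: "'a set" and d :: "'a \<Rightarrow> 'a \<Rightarrow> real" and lam :: nat
    and eta :: nat and tau r0 :: real
    and Ss :: "nat \<Rightarrow> ('a \<times> 'a set) set" and J j :: nat
    and lstar :: 'a and Sstar :: "'a set"
  assumes "finite_metric V d" and "card V \<ge> 2"
    and "doubling V d lam"
    and "eta \<ge> 2"
    and "1 + 1 / (2 ^ (eta - 1) - 1) \<le> tau" and "tau \<le> 2 ^ eta"
    and "0 < r0" and "\<forall>u\<in>V. \<forall>v\<in>V. u \<noteq> v \<longrightarrow> r0 < d u v"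
    and "hier_run V d eta tau r0 Ss J"
    and "1 \<le> j" and "j \<le> J"
    and "(lstar, Sstar) \<in> Ss j"
  shows "card {S. \<exists>l. (l, S) \<in> Ss (j - 1) \<and> S \<subseteq> Sstar} \<le> lam ^ (3 + eta)"
proof -
  have "(2::real) ^ (eta - 1) \<ge> 2 ^ 1" using assms(4) by (intro power_increasing) auto
  then have "1 / ((2::real) ^ (eta - 1) - 1) > 0" by simp
  then have "tau > 0" using assms(5) by linarith
  obtain m where j: "j = Suc m" and "m < J" using assms(10,11) by (cases j) auto
  have "card {S. \<exists>l. (l, S) \<in> Ss (j - 1) \<and> S \<subseteq> Sstar} \<le> lam ^ (eta + 1)"
    using hier_run_children_bound[OF assms(1,3) \<open>tau > 0\<close> assms(6-9) \<open>m < J\<close>] assms(12)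
    unfolding j by simp
  also have "\<dots> \<le> lam ^ (3 + eta)"
  proof (cases "lam = 0")
    case False
    then show ?thesis by (intro power_increasing) auto
  qed simp
  finally show ?thesis .
qed

end
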